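(* Let $g:[0,1]^2\to\mathbb{R}$ be symmetric (i.e. $g((x,y))=g((y,x))$ for all $(x,y)\in[0,1]^2$) and strictly increasing in both $x$ and $y$ (i.e. $g((x,y))>g((x',y))$ whenever $x>x'$ and $g((x,y))>g((x,y'))$ whenever $y>y'$). Consider the greedy algorithm that processes the points of a finite set $S\subset[0,1]^2$ containing the origin in any order in which $p$ is processed before $q$ whenever $g(p)>g(q)$. Then the worst-case approximation ratio of this algorithm is at most $3/4$; that is, $$\inf_{S}\frac{\mathrm{area}(R_{\mathrm{greedy}}(S))}{\mathrm{OPT}(S)}\le \frac34,$$ where the infimum is over all finite $S\subset[0,1]^2$ with $(0,0)\in S$, $R_{\mathrm{greedy}}(S)$ is the packing output by the algorithm, and $\mathrm{OPT}(S)$ is the maximum area of a lower-left anchored rectangle packing of $S$.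
   Context: $U=[0,1]^2$. For a point $p$, $x(p),y(p)$ are its coordinates. A rectangle is lower-left anchored at $p$ if it is an axis-parallel rectangle with lower-left corner $p$ (a point or segment counts as a degenerate rectangle of area $0$). A lower-left anchored rectangle packing (LLARP) of $S$ is a set of axis-parallel rectangles contained in $U$, pairwise interior-disjoint, with one rectangle lower-left anchored at each point of $S$, none containing a point of $S$ in its interior; its area is the area of the union of its rectangles. The greedy algorithm for a given processing order: start with $R=\emptyset$; for each point $p$ in the order, add to $R$ a maximum-area rectangle contained in $U$, lower-left anchored at $p$, interior-disjoint from the rectangles already in $R$ and containing no point of $S$ in its interior; return $R$. *)

theory Defs
  imports "HOL-Analysis.Analysis"
begin

text \<open>Points are pairs of reals. An axis-parallel rectangle is represented by its
lower-left corner and its upper-right corner (degenerate ones allowed).\<close>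

type_synonym point = "real \<times> real"
type_synonym rect = "point \<times> point"

definition unit_sq :: "point set" where
  "unit_sq = {0..1} \<times> {0..1}"

definition rect_set :: "rect \<Rightarrow> point set" where
  "rect_set r = {fst (fst r) .. fst (snd r)} \<times> {snd (fst r) .. snd (snd r)}"

definition rect_int :: "rect \<Rightarrow> point set" where
  "rect_int r = {fst (fst r) <..< fst (snd r)} \<times> {snd (fst r) <..< snd (snd r)}"

definition rect_area :: "rect \<Rightarrow> real" where
  "rect_area r = (fst (snd r) - fst (fst r)) * (snd (snd r) - snd (fst r))"

definition anchored_ok :: "point set \<Rightarrow> point \<Rightarrow> rect \<Rightarrow> bool" where
  "anchored_ok S p r \<longleftrightarrow> fst r = p \<and> fst p \<le> fst (snd r) \<and> snd p \<le> snd (snd r)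
     \<and> rect_set r \<subseteq> unit_sq \<and> (\<forall>q\<in>S. q \<notin> rect_int r)"

definition is_llarp :: "point set \<Rightarrow> rect set \<Rightarrow> bool" where
  "is_llarp S R \<longleftrightarrow> (\<exists>f. R = f ` S \<and> (\<forall>p\<in>S. anchored_ok S p (f p))
     \<and> (\<forall>p\<in>S. \<forall>q\<in>S. p \<noteq> q \<longrightarrow> rect_int (f p) \<inter> rect_int (f q) = {}))"

definition packing_area :: "rect set \<Rightarrow> real" where
  "packing_area R = measure lborel (\<Union> (rect_set ` R))"

definition OPT :: "point set \<Rightarrow> real" where
  "OPT S = Sup {packing_area R | R. is_llarp S R}"

definition greedy_cand :: "point set \<Rightarrow> rect set \<Rightarrow> point \<Rightarrow> rect \<Rightarrow> bool" where
  "greedy_cand S prev p r \<longleftrightarrow> anchored_ok S p r \<and> (\<forall>r'\<in>prev. rect_int r \<inter> rect_int r' = {})"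

text \<open>The output is set rs.\<close>
definition greedy_run :: "(point \<Rightarrow> real) \<Rightarrow> point set \<Rightarrow> point list \<Rightarrow> rect list \<Rightarrow> bool" where
  "greedy_run g S ps rs \<longleftrightarrow> distinct ps \<and> set ps = S \<and> length rs = length ps
     \<and> (\<forall>i<length ps. \<forall>j<length ps. g (ps ! i) > g (ps ! j) \<longrightarrow> i < j)
     \<and> (\<forall>i<length ps. greedy_cand S (set (take i rs)) (ps ! i) (rs ! i)
          \<and> (\<forall>r. greedy_cand S (set (take i rs)) (ps ! i) r \<longrightarrow> rect_area r \<le> rect_area (rs ! i)))"

end

theory Submission
  imports Defs
begin

text \<open>The bad instance is self-similar. A gadget consists of the six points
  \<open>(0, 0), (0, a), (c, 0), (c, h), (c, z), (z, h)\<close> of the unit square; level \<open>k\<close> is a copy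
  of it shrunk by \<open>(1 - z)\<^sup>k\<close> towards \<open>(1, 1)\<close>, and after \<open>n\<close> levels one point takes the
  remaining square. As \<open>g\<close> increases with the sorted coordinates, the processing order within
  a gadget is fixed, and every greedy choice is forced: \<open>(0, a)\<close> prefers the wide rectangle
  up to height \<open>h\<close> to the tall one of width \<open>c\<close>, so the strip \<open>[0, c] \<times> [h, 1]\<close> of each
  gadget stays uncovered, while another packing covers the whole square. Greedy thus loses
  \<open>c (1 - h)\<close> of the area \<open>1 - (1 - z)\<^sup>2 \<approx> 4c\<close> of every level, which for \<open>h = 2c\<close> and
  \<open>z \<approx> 2c\<close> tends to a quarter.\<close>

section \<open>Rectangles\<close>

lemma mem_rect_int:
  "q \<in> rect_int r \<longleftrightarrow>
     fst (fst r) < fst q \<and> fst q < fst (snd r) \<and> snd (fst r) < snd q \<and> snd q < snd (snd r)"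
  by (cases q) (auto simp: rect_int_def)

lemma rect_int_disjointI:
  assumes "x1 \<le> x0' \<or> x1' \<le> x0 \<or> y1 \<le> y0' \<or> y1' \<le> y0"
  shows "rect_int ((x0, y0), (x1, y1)) \<inter> rect_int ((x0', y0'), (x1', y1')) = {}"
  using assms by (auto simp: rect_int_def)

lemma rect_int_disjoint_iff:
  fixes x0 y0 x1 y1 x0' y0' x1' y1' :: real
  assumes "x0 < x1" "y0 < y1" "x0' < x1'" "y0' < y1'"
  shows "rect_int ((x0, y0), (x1, y1)) \<inter> rect_int ((x0', y0'), (x1', y1')) = {} \<longleftrightarrow>
    x1 \<le> x0' \<or> x1' \<le> x0 \<or> y1 \<le> y0' \<or> y1' \<le> y0"
proof
  assume disj: "rect_int ((x0, y0), (x1, y1)) \<inter> rect_int ((x0', y0'), (x1', y1')) = {}"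
  show "x1 \<le> x0' \<or> x1' \<le> x0 \<or> y1 \<le> y0' \<or> y1' \<le> y0"
  proof (rule ccontr)
    assume "\<not> ?thesis"
    then have "((max x0 x0' + min x1 x1') / 2, (max y0 y0' + min y1 y1') / 2)
        \<in> rect_int ((x0, y0), (x1, y1)) \<inter> rect_int ((x0', y0'), (x1', y1'))"
      using assms by (auto simp: rect_int_def max_def min_def)
    with disj show False by simp
  qed
qed (rule rect_int_disjointI)

lemma rect_area_pos_imp_less:
  assumes "p \<le> w" "0 < rect_area (p, w)"
  shows "fst p < fst w" "snd p < snd w"
  using assms by (auto simp: rect_area_def less_eq_prod_def zero_less_mult_iff)

lemma mult_eq_if_le_mult:
  fixes a b A B :: real
  assumes "0 \<le> a" "a \<le> A" "0 \<le> b" "b \<le> B" "0 < A" "0 < B" "A * B \<le> a * b"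
  shows "a = A" "b = B"
proof -
  have "a * b \<le> a * B" "a * B \<le> A * B"
    using assms by (auto intro: mult_left_mono mult_right_mono)
  then have "a * B = A * B" using assms(7) by linarith
  then show "a = A" using \<open>0 < B\<close> by simp
  then show "b = B" using assms(4,5,7) by (simp add: mult_le_cancel_left_pos)
qed

lemma rect_corner_eq_if_area_ge:
  assumes "p \<le> w" "w \<le> W" "0 < rect_area (p, W)" "rect_area (p, W) \<le> rect_area (p, w)"
  shows "w = W"
proof -
  have "fst p < fst W" "snd p < snd W"
    using rect_area_pos_imp_less[of p W] assms(1,2,3) order_trans by blast+
  then have "fst w - fst p = fst W - fst p" "snd w - snd p = snd W - snd p"
    using mult_eq_if_le_mult[of "fst w - fst p" "fst W - fst p" "snd w - snd p" "snd W - snd p"]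
      assms(1,2,4) by (auto simp: rect_area_def less_eq_prod_def)
  then show ?thesis by (simp add: prod_eq_iff)
qed

lemma rect_set_eq_cbox: "rect_set r = cbox (fst r) (snd r)"
  by (cases r) (auto simp: rect_set_def cbox_Pair_eq)

lemma rect_int_eq_box: "rect_int r = box (fst r) (snd r)"
  by (auto simp: mem_rect_int mem_box Basis_prod_def inner_prod_def)

lemma measure_rect_set:
  assumes "fst r \<le> snd r"
  shows "measure lebesgue (rect_set r) = rect_area r"
proof -
  obtain x0 y0 x1 y1 where r: "r = ((x0, y0), (x1, y1))" by (metis prod.collapse)
  have "measure lebesgue (rect_set r) = measure lborel (cbox (x0, y0) (x1, y1))"
    by (simp add: r rect_set_eq_cbox)
  also have "\<dots> = rect_area r"
    using assms by (simp add: r content_Pair rect_area_def less_eq_prod_def)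
  finally show ?thesis .
qed

lemma negligible_rect_set_Int:
  assumes "rect_int r \<inter> rect_int r' = {}"
  shows "negligible (rect_set r \<inter> rect_set r')"
proof (rule negligible_subset)
  show "negligible ((rect_set r - rect_int r) \<union> (rect_set r' - rect_int r'))"
    by (simp add: rect_set_eq_cbox rect_int_eq_box negligible_frontier_interval negligible_Un)
  show "rect_set r \<inter> rect_set r' \<subseteq> (rect_set r - rect_int r) \<union> (rect_set r' - rect_int r')"
    using assms by blast
qed

section \<open>Packings and their area\<close>

definition llarp_map :: "point set \<Rightarrow> (point \<Rightarrow> rect) \<Rightarrow> bool" where
  "llarp_map S F \<longleftrightarrow> (\<forall>p\<in>S. anchored_ok S p (F p))
     \<and> (\<forall>p\<in>S. \<forall>q\<in>S. p \<noteq> q \<longrightarrow> rect_int (F p) \<inter> rect_int (F q) = {})"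

lemma is_llarp_iff: "is_llarp S R \<longleftrightarrow> (\<exists>F. R = F ` S \<and> llarp_map S F)"
  by (auto simp: is_llarp_def llarp_map_def)

lemma anchored_ok_le: "anchored_ok S p r \<Longrightarrow> fst r \<le> snd r"
  by (auto simp: anchored_ok_def less_eq_prod_def)

text \<open>The rectangles of a packing overlap only in their boundaries, which are null sets.\<close>
lemma packing_area_eq_sum:
  assumes "finite S" "llarp_map S F"
  shows "packing_area (F ` S) = (\<Sum>p\<in>S. rect_area (F p))"
proof -
  have "packing_area (F ` S) = measure lborel (\<Union>p\<in>S. rect_set (F p))"
    by (simp add: packing_area_def image_image)
  also have "\<dots> = measure lebesgue (\<Union>p\<in>S. rect_set (F p))"
    using assms(1) by (intro measure_completion[symmetric]) (auto simp: rect_set_eq_cbox)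
  also have "\<dots> = (\<Sum>p\<in>S. measure lebesgue (rect_set (F p)))"
  proof (rule measure_negligible_finite_Union_image[OF assms(1)])
    show "pairwise (\<lambda>p q. negligible (rect_set (F p) \<inter> rect_set (F q))) S"
      using assms(2) unfolding pairwise_def llarp_map_def by (blast intro: negligible_rect_set_Int)
  qed (simp add: rect_set_eq_cbox)
  also have "\<dots> = (\<Sum>p\<in>S. rect_area (F p))"
    using assms(2) by (intro sum.cong refl measure_rect_set)
      (auto simp: llarp_map_def intro: anchored_ok_le)
  finally show ?thesis .
qed

lemma packing_area_le_1:
  assumes "finite S" "is_llarp S R"
  shows "packing_area R \<le> 1"
proof -
  obtain F where R: "R = F ` S" and F: "\<forall>p\<in>S. anchored_ok S p (F p)"
    using assms(2) by (auto simp: is_llarp_def)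
  have "\<Union> (rect_set ` R) \<subseteq> cbox (0, 0) (1, 1)"
    using F by (auto simp: R anchored_ok_def unit_sq_def cbox_Pair_eq)
  moreover have "\<Union> (rect_set ` R) \<in> sets lborel"
    using assms(1) by (auto simp: R rect_set_eq_cbox)
  ultimately have "packing_area R \<le> measure lborel (cbox (0, 0) (1::real, 1::real))"
    unfolding packing_area_def by (intro measure_mono_fmeasurable) auto
  then show ?thesis by (simp add: content_Pair)
qed

lemma packing_area_le_OPT:
  assumes "finite S" "is_llarp S R"
  shows "packing_area R \<le> OPT S"
  unfolding OPT_def using assms packing_area_le_1
  by (intro cSup_upper) (auto intro: bdd_aboveI[of _ 1])

section \<open>The greedy algorithm\<close>

lemma greedy_run_eq_map:
  assumes run: "greedy_run g S ps rs"
    and F: "llarp_map S F"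
    and forced: "\<And>p prev r. p \<in> S \<Longrightarrow> F ` {q \<in> S. g p < g q} \<subseteq> prev \<Longrightarrow>
      greedy_cand S prev p r \<Longrightarrow> rect_area (F p) \<le> rect_area r \<Longrightarrow> r = F p"
  shows "rs = map F ps"
proof -
  have distinct: "distinct ps" and set_ps: "set ps = S" and len: "length rs = length ps"
    and order: "\<forall>i<length ps. \<forall>j<length ps. g (ps ! i) > g (ps ! j) \<longrightarrow> i < j"
    and step: "\<forall>i<length ps. greedy_cand S (set (take i rs)) (ps ! i) (rs ! i)
      \<and> (\<forall>r. greedy_cand S (set (take i rs)) (ps ! i) r \<longrightarrow> rect_area r \<le> rect_area (rs ! i))"
    using run unfolding greedy_run_def by blast+
  have "rs ! i = F (ps ! i)" if "i < length ps" for i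
    using that
  proof (induction i rule: less_induct)
    case (less i)
    have "take i rs = map F (take i ps)"
      using less len by (intro nth_equalityI) auto
    then have prev: "set (take i rs) = F ` set (take i ps)" by simp
    have p: "ps ! i \<in> S" using less.prems set_ps by auto
    have "ps ! i \<in> set (drop i ps)"
      using less.prems nth_mem[of 0 "drop i ps"] by simp
    then have "ps ! i \<notin> set (take i ps)"
      using set_take_disj_set_drop_if_distinct[OF distinct, of i i] by blast
    have "greedy_cand S (set (take i rs)) (ps ! i) (F (ps ! i))"
      unfolding greedy_cand_def prev
    proof (intro conjI ballI)
      show "anchored_ok S (ps ! i) (F (ps ! i))" using F p by (simp add: llarp_map_def)
    next
      fix r' assume "r' \<in> F ` set (take i ps)"
      then obtain q where q: "q \<in> set (take i ps)" and r': "r' = F q" by blast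
      have "q \<in> S" "q \<noteq> ps ! i"
        using q set_take_subset[of i ps] set_ps \<open>ps ! i \<notin> set (take i ps)\<close> by auto
      then show "rect_int (F (ps ! i)) \<inter> rect_int r' = {}"
        using F p unfolding r' llarp_map_def by blast
    qed
    then have area: "rect_area (F (ps ! i)) \<le> rect_area (rs ! i)"
      using step less.prems by blast
    have "F q \<in> set (take i rs)" if q: "q \<in> S" and gq: "g (ps ! i) < g q" for q
    proof -
      obtain j where "j < length ps" "q = ps ! j"
        using q unfolding set_ps[symmetric] in_set_conv_nth by blast
      moreover have "j < i" using order calculation less.prems gq by simp
      ultimately have "q \<in> set (take i ps)"
        using nth_mem[of j "take i ps"] by simp
      then show ?thesis unfolding prev by blast
    qed
    then have "F ` {q \<in> S. g (ps ! i) < g q} \<subseteq> set (take i rs)" by blast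
    then show ?case using forced p step less.prems area by blast
  qed
  then show ?thesis using len by (auto intro: nth_equalityI)
qed

lemma g_less_if_less:
  fixes g :: "point \<Rightarrow> real"
  assumes incx: "\<forall>x\<in>{0..1}. \<forall>x'\<in>{0..1}. \<forall>y\<in>{0..1}. x > x' \<longrightarrow> g (x, y) > g (x', y)"
    and incy: "\<forall>x\<in>{0..1}. \<forall>y\<in>{0..1}. \<forall>y'\<in>{0..1}. y > y' \<longrightarrow> g (x, y) > g (x, y')"
    and "p \<in> unit_sq" "q \<in> unit_sq" "q < p"
  shows "g q < g p"
proof -
  obtain x y x' y' where p: "p = (x, y)" and q: "q = (x', y')" by fastforce
  have unit: "x \<in> {0..1}" "y \<in> {0..1}" "x' \<in> {0..1}" "y' \<in> {0..1}"
    using assms(3,4) by (auto simp: p q unit_sq_def)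
  have le: "x' \<le> x" "y' \<le> y" and ne: "x' < x \<or> y' < y"
    using \<open>q < p\<close> by (auto simp: p q less_prod_def less_eq_prod_def)
  have "g (x', y') < g (x', y)" if "y' < y"
    using incy unit that by blast
  moreover have "g (x', y) < g (x, y)" if "x' < x"
    using incx unit that by blast
  ultimately show ?thesis
    using le ne by (cases "x' < x"; cases "y' < y") (auto simp: p q)
qed

definition sort_pt :: "point \<Rightarrow> point" where
  "sort_pt p = (max (fst p) (snd p), min (fst p) (snd p))"

lemma g_less_if_sort_pt_less:
  fixes g :: "point \<Rightarrow> real"
  assumes sym: "\<forall>x\<in>{0..1}. \<forall>y\<in>{0..1}. g (x, y) = g (y, x)"
    and incx: "\<forall>x\<in>{0..1}. \<forall>x'\<in>{0..1}. \<forall>y\<in>{0..1}. x > x' \<longrightarrow> g (x, y) > g (x', y)"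
    and incy: "\<forall>x\<in>{0..1}. \<forall>y\<in>{0..1}. \<forall>y'\<in>{0..1}. y > y' \<longrightarrow> g (x, y) > g (x, y')"
    and "p \<in> unit_sq" "q \<in> unit_sq" "sort_pt q < sort_pt p"
  shows "g q < g p"
proof -
  have sort: "g (sort_pt r) = g r" "sort_pt r \<in> unit_sq" if "r \<in> unit_sq" for r
    using sym that by (auto simp: sort_pt_def unit_sq_def max_def min_def)
  show ?thesis
    using g_less_if_less[OF incx incy, of "sort_pt p" "sort_pt q"] sort assms(4-6) by simp
qed

section \<open>The gadget\<close>

datatype site = Corner | Up | Side | Mid | Top | Right

lemma UNIV_site: "UNIV = {Corner, Up, Side, Mid, Top, Right}"
  using site.exhaust by auto

locale gadget =
  fixes c a h z :: real
  assumes c_pos: "0 < c" and c_less_a: "c < a" and a_less_h: "a < h"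
    and h_less_z: "h < z" and z_less_1: "z < 1"
    and wide: "c * (1 - a) < h - a"
begin

lemmas gadget_order = c_pos c_less_a a_less_h h_less_z z_less_1

fun site_pt :: "site \<Rightarrow> point" where
  "site_pt Corner = (0, 0)"
| "site_pt Up = (0, a)"
| "site_pt Side = (c, 0)"
| "site_pt Mid = (c, h)"
| "site_pt Top = (c, z)"
| "site_pt Right = (z, h)"

fun greedy_corner :: "site \<Rightarrow> point" where
  "greedy_corner Corner = (c, a)"
| "greedy_corner Up = (1, h)"
| "greedy_corner Side = (1, a)"
| "greedy_corner Mid = (z, z)"
| "greedy_corner Top = (z, 1)"
| "greedy_corner Right = (1, z)"

fun opt_corner :: "site \<Rightarrow> point" where
  "opt_corner Up = (c, 1)"
| "opt_corner Side = (1, h)"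
| "opt_corner t = greedy_corner t"

fun blockers :: "site \<Rightarrow> site set" where
  "blockers Corner = {Up, Side}"
| "blockers Side = {Up}"
| "blockers Mid = {Top, Right}"
| "blockers _ = {}"

lemma site_pt_bounds:
  "(0, 0) \<le> site_pt t" "site_pt t \<le> (1, 1)" "site_pt t \<in> unit_sq"
  "fst (site_pt t) < z \<or> snd (site_pt t) < z"
  using gadget_order by (cases t; simp add: less_eq_prod_def unit_sq_def)+

lemma inj_site_pt: "inj site_pt"
proof (rule injI)
  fix t t' assume "site_pt t = site_pt t'"
  then show "t = t'" using gadget_order by (cases t; cases t') auto
qed

text \<open>The last conjunct keeps each rectangle out of the next level \<open>(z, 1]\<^sup>2\<close>.\<close>
definition gadget_packing :: "(site \<Rightarrow> point) \<Rightarrow> bool" where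
  "gadget_packing corner \<longleftrightarrow>
     (\<forall>t. site_pt t \<le> corner t \<and> corner t \<le> (1, 1) \<and> (fst (corner t) \<le> z \<or> snd (corner t) \<le> z))
     \<and> (\<forall>t t'. site_pt t' \<notin> rect_int (site_pt t, corner t))
     \<and> (\<forall>t t'. t \<noteq> t' \<longrightarrow> rect_int (site_pt t, corner t) \<inter> rect_int (site_pt t', corner t') = {})"

lemma gadget_packing_corners: "gadget_packing greedy_corner" "gadget_packing opt_corner"
proof -
  have "gadget_packing corner" if corner: "corner = greedy_corner \<or> corner = opt_corner" for corner
  proof -
    have "site_pt t \<le> corner t \<and> corner t \<le> (1, 1) \<and> (fst (corner t) \<le> z \<or> snd (corner t) \<le> z)"
      for t
      using corner gadget_order by (cases t) (auto simp: less_eq_prod_def)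
    moreover have "site_pt t' \<notin> rect_int (site_pt t, corner t)" for t t'
      using corner gadget_order by (cases t; cases t') (auto simp: mem_rect_int)
    moreover have "rect_int (site_pt t, corner t) \<inter> rect_int (site_pt t', corner t') = {}"
      if "t \<noteq> t'" for t t'
      using that corner gadget_order by (cases t; cases t') (auto simp: mem_rect_int)
    ultimately show ?thesis unfolding gadget_packing_def by blast
  qed
  then show "gadget_packing greedy_corner" "gadget_packing opt_corner" by simp_all
qed

lemma sum_greedy_corner_area:
  "(\<Sum>t\<in>UNIV. rect_area (site_pt t, greedy_corner t)) = 1 - (1 - z)\<^sup>2 - c * (1 - h)"
  by (simp add: UNIV_site rect_area_def power2_eq_square algebra_simps)

lemma sum_opt_corner_area: "(\<Sum>t\<in>UNIV. rect_area (site_pt t, opt_corner t)) = 1 - (1 - z)\<^sup>2"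
  by (simp add: UNIV_site rect_area_def power2_eq_square algebra_simps)

lemma sort_pt_blocker_less:
  "t' \<in> blockers t \<Longrightarrow> sort_pt (site_pt t) < sort_pt (site_pt t')"
  using gadget_order by (cases t; cases t') (auto simp: sort_pt_def less_prod_def less_eq_prod_def)

lemma sort_pt_less_next_level:
  "t \<in> {Top, Right} \<Longrightarrow> sort_pt (site_pt t) < (z, z)"
  using gadget_order by (auto simp: sort_pt_def less_prod_def less_eq_prod_def)

text \<open>For \<open>Up\<close> the point \<open>Mid\<close> does the blocking, and \<open>wide\<close> makes the tall thin
  alternative lose.\<close>
lemma greedy_corner_forced:
  assumes w: "site_pt t \<le> w" "w \<le> (1, 1)"
    and area: "rect_area (site_pt t, greedy_corner t) \<le> rect_area (site_pt t, w)"
    and points: "\<And>t'. site_pt t' \<notin> rect_int (site_pt t, w)"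
    and blocked: "\<And>t'. t' \<in> blockers t \<Longrightarrow>
      rect_int (site_pt t, w) \<inter> rect_int (site_pt t', greedy_corner t') = {}"
    and next_blocked: "t \<in> {Top, Right} \<Longrightarrow> rect_int (site_pt t, w) \<inter> rect_int ((z, z), e) = {}"
    and e: "z < fst e" "z < snd e"
  shows "w = greedy_corner t"
proof -
  obtain u v where uv: "w = (u, v)" by fastforce
  have pos: "0 < rect_area (site_pt t, greedy_corner t)"
    using gadget_order by (cases t) (auto simp: rect_area_def)
  have nondeg: "fst (site_pt t) < u" "snd (site_pt t) < v"
    using rect_area_pos_imp_less[OF w(1)] pos area by (auto simp: uv)
  have bounds: "u \<le> 1" "v \<le> 1" using w(2) by (auto simp: uv less_eq_prod_def)
  have "w \<le> greedy_corner t"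
  proof (cases t)
    case Corner
    then show ?thesis
      using blocked[of Up] blocked[of Side] nondeg gadget_order
      by (auto simp: uv rect_int_disjoint_iff less_eq_prod_def)
  next
    case Up
    have "u \<le> c \<or> v \<le> h"
      using points[of Mid] nondeg gadget_order by (auto simp: Up uv mem_rect_int not_less)
    moreover have "\<not> u \<le> c"
    proof
      assume "u \<le> c"
      then have "rect_area (site_pt t, w) \<le> c * (1 - a)"
        using nondeg bounds by (auto simp: Up uv rect_area_def intro!: mult_mono)
      then show False using area wide by (simp add: Up rect_area_def)
    qed
    ultimately show ?thesis using bounds by (simp add: Up uv less_eq_prod_def)
  next
    case Side
    then show ?thesis
      using blocked[of Up] nondeg bounds gadget_order
      by (auto simp: uv rect_int_disjoint_iff less_eq_prod_def)
  next
    case Mid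
    then show ?thesis
      using blocked[of Top] blocked[of Right] nondeg gadget_order
      by (auto simp: uv rect_int_disjoint_iff less_eq_prod_def)
  next
    case Top
    then show ?thesis
      using next_blocked e nondeg bounds gadget_order
      by (cases e) (auto simp: uv rect_int_disjoint_iff less_eq_prod_def)
  next
    case Right
    then show ?thesis
      using next_blocked e nondeg bounds gadget_order
      by (cases e) (auto simp: uv rect_int_disjoint_iff less_eq_prod_def)
  qed
  then show ?thesis using rect_corner_eq_if_area_ge[OF w(1) _ pos area] by blast
qed

text \<open>Level \<open>k\<close> of the construction is the image of the unit square under the homothety
  \<open>lvl_pt k\<close> with centre \<open>(1, 1)\<close> and ratio \<open>(1 - z)\<^sup>k\<close>; it maps \<open>[z, 1]\<^sup>2\<close> onto level \<open>k + 1\<close>.\<close>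
definition lvl :: "nat \<Rightarrow> real \<Rightarrow> real" where
  "lvl k x = 1 - (1 - z) ^ k * (1 - x)"

definition lvl_pt :: "nat \<Rightarrow> point \<Rightarrow> point" where
  "lvl_pt k p = (lvl k (fst p), lvl k (snd p))"

definition lvl_rect :: "nat \<Rightarrow> rect \<Rightarrow> rect" where
  "lvl_rect k r = (lvl_pt k (fst r), lvl_pt k (snd r))"

lemma lvl_less_iff [simp]: "lvl k x < lvl k y \<longleftrightarrow> x < y"
  using z_less_1 by (simp add: lvl_def)

lemma lvl_le_iff [simp]: "lvl k x \<le> lvl k y \<longleftrightarrow> x \<le> y"
  using z_less_1 by (simp add: lvl_def)

lemma lvl_one [simp]: "lvl k 1 = 1"
  by (simp add: lvl_def)

lemma lvl_nonneg:
  assumes "0 \<le> x"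
  shows "0 \<le> lvl k x"
proof -
  have "(1 - z) ^ k * (1 - x) \<le> (1 - z) ^ k"
    using assms z_less_1 by (simp add: mult_left_le)
  moreover have "(1 - z) ^ k \<le> 1"
    using gadget_order by (simp add: power_le_one)
  ultimately show ?thesis by (simp add: lvl_def)
qed

lemma lvl_Suc: "lvl (Suc k) x = lvl k (z + (1 - z) * x)"
  by (simp add: lvl_def algebra_simps)

lemma lvl_surj: "\<exists>y. x = lvl k y"
  using z_less_1 by (intro exI[of _ "1 - (1 - x) / (1 - z) ^ k"]) (simp add: lvl_def)

lemma lvl_higher_level:
  assumes "k < k'" "0 \<le> y"
  shows "lvl k z \<le> lvl k' y"
proof -
  have "(1 - z) ^ k' \<le> (1 - z) ^ Suc k"
    using assms(1) gadget_order by (intro power_decreasing) auto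
  moreover have "(1 - z) ^ k' * (1 - y) \<le> (1 - z) ^ k'"
    using assms(2) gadget_order by (simp add: mult_left_le)
  ultimately have "(1 - z) ^ k' * (1 - y) \<le> (1 - z) ^ Suc k" by linarith
  then show ?thesis by (simp add: lvl_def algebra_simps)
qed

lemma lvl_pt_le_iff [simp]: "lvl_pt k p \<le> lvl_pt k q \<longleftrightarrow> p \<le> q"
  by (simp add: lvl_pt_def less_eq_prod_def)

lemma lvl_pt_less_iff [simp]: "lvl_pt k p < lvl_pt k q \<longleftrightarrow> p < q"
  by (simp add: less_prod_def)

lemma inj_lvl_pt: "inj (lvl_pt k)"
  by (rule injI) (simp add: order_eq_iff)

lemma lvl_pt_surj: "\<exists>q. p = lvl_pt k q"
proof -
  obtain x y where "fst p = lvl k x" "snd p = lvl k y" using lvl_surj by metis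
  then show ?thesis by (intro exI[of _ "(x, y)"]) (simp add: lvl_pt_def prod_eq_iff)
qed

lemma lvl_le_1: "x \<le> 1 \<Longrightarrow> lvl k x \<le> 1"
  using lvl_le_iff[of k x 1] by simp

lemma lvl_pt_unit_sq: "p \<in> unit_sq \<Longrightarrow> lvl_pt k p \<in> unit_sq"
  by (auto simp: lvl_pt_def unit_sq_def mem_Times_iff lvl_nonneg lvl_le_1)

lemma sort_pt_lvl_pt: "sort_pt (lvl_pt k p) = lvl_pt k (sort_pt p)"
  by (simp add: sort_pt_def lvl_pt_def max_def min_def)

lemma mem_rect_int_lvl_rect [simp]: "lvl_pt k q \<in> rect_int (lvl_rect k r) \<longleftrightarrow> q \<in> rect_int r"
  by (simp add: mem_rect_int lvl_rect_def lvl_pt_def)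

lemma rect_int_lvl_rect: "rect_int (lvl_rect k r) = lvl_pt k ` rect_int r"
proof
  show "rect_int (lvl_rect k r) \<subseteq> lvl_pt k ` rect_int r"
  proof
    fix p assume "p \<in> rect_int (lvl_rect k r)"
    moreover obtain q where "p = lvl_pt k q" using lvl_pt_surj by blast
    ultimately show "p \<in> lvl_pt k ` rect_int r" by simp
  qed
qed auto

lemma lvl_rect_disjoint_iff [simp]:
  "rect_int (lvl_rect k r) \<inter> rect_int (lvl_rect k r') = {} \<longleftrightarrow> rect_int r \<inter> rect_int r' = {}"
  by (simp add: rect_int_lvl_rect flip: image_Int[OF inj_lvl_pt])

lemma rect_area_lvl_rect: "rect_area (lvl_rect k r) = ((1 - z)\<^sup>2) ^ k * rect_area r"
  by (simp add: rect_area_def lvl_rect_def lvl_pt_def lvl_def algebra_simps power_mult_distrib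
      flip: power_mult power2_eq_square)

lemma rect_set_lvl_rect_subset:
  assumes "(0, 0) \<le> p" "w \<le> (1, 1)"
  shows "rect_set (lvl_rect k (p, w)) \<subseteq> unit_sq"
proof -
  have "0 \<le> lvl k (fst p)" "0 \<le> lvl k (snd p)" "lvl k (fst w) \<le> 1" "lvl k (snd w) \<le> 1"
    using assms by (auto simp: less_eq_prod_def lvl_nonneg lvl_le_1)
  then show ?thesis
    by (auto simp: rect_set_def unit_sq_def lvl_rect_def lvl_pt_def)
qed

lemma lvl_pt_notin_lower_level_rect:
  assumes "k < k'" "(0, 0) \<le> q" "fst u \<le> z \<or> snd u \<le> z"
  shows "lvl_pt k' q \<notin> rect_int (lvl_rect k (p, u))"
proof -
  have "lvl k z \<le> lvl k' (fst q)" "lvl k z \<le> lvl k' (snd q)"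
    using assms(1,2) by (auto simp: less_eq_prod_def intro: lvl_higher_level)
  moreover have "lvl k (fst u) \<le> lvl k z \<or> lvl k (snd u) \<le> lvl k z"
    using assms(3) by simp
  ultimately show ?thesis
    by (auto simp: mem_rect_int lvl_rect_def lvl_pt_def simp del: lvl_le_iff lvl_less_iff)
qed

lemma lvl_pt_notin_higher_level_rect:
  assumes "k' < k" "fst q < z \<or> snd q < z" "(0, 0) \<le> p"
  shows "lvl_pt k' q \<notin> rect_int (lvl_rect k (p, u))"
proof -
  have "lvl k' z \<le> lvl k (fst p)" "lvl k' z \<le> lvl k (snd p)"
    using assms(1,3) by (auto simp: less_eq_prod_def intro: lvl_higher_level)
  moreover have "lvl k' (fst q) < lvl k' z \<or> lvl k' (snd q) < lvl k' z"
    using assms(2) by simp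
  ultimately show ?thesis
    by (auto simp: mem_rect_int lvl_rect_def lvl_pt_def simp del: lvl_le_iff lvl_less_iff)
qed

lemma lvl_rects_disjoint:
  assumes "k < k'" "fst u \<le> z \<or> snd u \<le> z" "(0, 0) \<le> p'"
  shows "rect_int (lvl_rect k (p, u)) \<inter> rect_int (lvl_rect k' (p', u')) = {}"
proof -
  have "lvl k z \<le> lvl k' (fst p')" "lvl k z \<le> lvl k' (snd p')"
    using assms(1,3) by (auto simp: less_eq_prod_def intro: lvl_higher_level)
  moreover have "lvl k (fst u) \<le> lvl k z \<or> lvl k (snd u) \<le> lvl k z"
    using assms(2) by simp
  ultimately show ?thesis
    unfolding lvl_rect_def lvl_pt_def by (intro rect_int_disjointI) (auto simp del: lvl_le_iff)
qed

lemma greedy_cand_lvl_cases: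
  assumes "greedy_cand S prev (lvl_pt k p) r"
  obtains w where "r = lvl_rect k (p, w)" "p \<le> w" "w \<le> (1, 1)"
    "\<And>q. lvl_pt k q \<in> S \<Longrightarrow> q \<notin> rect_int (p, w)"
    "\<And>r'. lvl_rect k r' \<in> prev \<Longrightarrow> rect_int (p, w) \<inter> rect_int r' = {}"
proof -
  obtain w where w: "snd r = lvl_pt k w" using lvl_pt_surj by blast
  have anchored: "fst r = lvl_pt k p" "lvl_pt k p \<le> snd r" "rect_set r \<subseteq> unit_sq"
    "\<forall>q\<in>S. q \<notin> rect_int r" "\<forall>r'\<in>prev. rect_int r \<inter> rect_int r' = {}"
    using assms by (auto simp: greedy_cand_def anchored_ok_def less_eq_prod_def)
  have r: "r = lvl_rect k (p, w)"
    using anchored(1) w by (simp add: lvl_rect_def prod_eq_iff)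
  have "snd r \<in> rect_set r"
    using anchored(1,2) by (auto simp: rect_set_def less_eq_prod_def mem_Times_iff)
  then have "lvl_pt k w \<le> lvl_pt k (1, 1)"
    using anchored(3) w by (auto simp: unit_sq_def less_eq_prod_def lvl_pt_def)
  show ?thesis
  proof (rule that[OF r])
    show "p \<le> w" "w \<le> (1, 1)"
      using anchored(2) w \<open>lvl_pt k w \<le> lvl_pt k (1, 1)\<close> by simp_all
    show "q \<notin> rect_int (p, w)" if "lvl_pt k q \<in> S" for q
      using anchored(4) that by (auto simp: r)
    show "rect_int (p, w) \<inter> rect_int r' = {}" if "lvl_rect k r' \<in> prev" for r'
      using bspec[OF anchored(5) that] by (simp add: r)
  qed
qed

end

section \<open>The chain of gadgets\<close>

locale gadget_chain = gadget +
  fixes n :: nat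
begin

definition sites :: "(nat \<times> site) set" where
  "sites = ({..<n} \<times> UNIV) \<union> {(n, Corner)}"

fun chain_pt :: "nat \<times> site \<Rightarrow> point" where
  "chain_pt (k, t) = lvl_pt k (site_pt t)"

declare chain_pt.simps [simp del]

definition chain_points :: "point set" where
  "chain_points = chain_pt ` sites"

fun chain_rect :: "(site \<Rightarrow> point) \<Rightarrow> nat \<times> site \<Rightarrow> rect" where
  "chain_rect corner (k, t) = lvl_rect k (site_pt t, if k < n then corner t else (1, 1))"

declare chain_rect.simps [simp del]

definition rect_at :: "(site \<Rightarrow> point) \<Rightarrow> point \<Rightarrow> rect" where
  "rect_at corner p = chain_rect corner (the_inv_into sites chain_pt p)"

lemma finite_sites: "finite sites"
  by (simp add: sites_def UNIV_site)

lemma finite_chain_points: "finite chain_points"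
  by (simp add: chain_points_def finite_sites)

lemma sites_level_le: "(k, t) \<in> sites \<Longrightarrow> k \<le> n"
  by (auto simp: sites_def)

lemma chain_pt_unit_sq: "chain_pt x \<in> unit_sq"
  by (cases x) (simp add: chain_pt.simps lvl_pt_unit_sq site_pt_bounds)

lemma chain_points_subset_unit_sq: "chain_points \<subseteq> unit_sq"
  using chain_pt_unit_sq by (auto simp: chain_points_def)

lemma origin_in_chain_points: "(0, 0) \<in> chain_points"
proof -
  have "chain_pt (0, Corner) = (0, 0)" by (simp add: chain_pt.simps lvl_pt_def lvl_def)
  moreover have "(0, Corner) \<in> sites" by (auto simp: sites_def)
  ultimately show ?thesis unfolding chain_points_def by force
qed

lemma inj_on_chain_pt: "inj_on chain_pt sites"
proof (rule inj_onI)
  fix x y assume "x \<in> sites" "y \<in> sites" and eq: "chain_pt x = chain_pt y"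
  obtain k t k' t' where x: "x = (k, t)" and y: "y = (k', t')" by fastforce
  have "lvl_pt k (site_pt t) \<noteq> lvl_pt k' (site_pt t')" if "k < k'" for k t k' t'
  proof -
    have "lvl k z \<le> lvl k' (fst (site_pt t'))" "lvl k z \<le> lvl k' (snd (site_pt t'))"
      using that site_pt_bounds(1)[of t'] by (auto simp: less_eq_prod_def intro: lvl_higher_level)
    moreover have "lvl k (fst (site_pt t)) < lvl k z \<or> lvl k (snd (site_pt t)) < lvl k z"
      using site_pt_bounds(4)[of t] by simp
    ultimately show ?thesis by (auto simp: lvl_pt_def simp del: lvl_le_iff lvl_less_iff)
  qed
  then have "k = k'" using eq by (metis x y chain_pt.simps linorder_neqE_nat)
  then show "x = y" using eq inj_site_pt inj_lvl_pt by (simp add: x y chain_pt.simps inj_eq)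
qed

lemma chain_pt_notin_chain_rect:
  assumes corner: "gadget_packing corner" and x: "(k, t) \<in> sites" and y: "(k', t') \<in> sites"
  shows "chain_pt (k', t') \<notin> rect_int (chain_rect corner (k, t))"
proof (cases rule: linorder_cases[of k' k])
  case less
  then show ?thesis
    using lvl_pt_notin_higher_level_rect[OF less site_pt_bounds(4) site_pt_bounds(1)]
    by (simp add: chain_pt.simps chain_rect.simps)
next
  case equal
  have "site_pt t' \<notin> rect_int (site_pt t, if k < n then corner t else (1, 1))"
  proof (cases "k < n")
    case True
    then show ?thesis using corner by (simp add: gadget_packing_def)
  next
    case False
    then show ?thesis using x y equal by (auto simp: sites_def mem_rect_int)
  qed
  then show ?thesis using equal by (simp add: chain_pt.simps chain_rect.simps)
next
  case greater
  then have "k < n" using sites_level_le[OF y] by simp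
  then have "fst (corner t) \<le> z \<or> snd (corner t) \<le> z"
    using corner by (simp add: gadget_packing_def)
  then show ?thesis
    using lvl_pt_notin_lower_level_rect[OF greater site_pt_bounds(1)] \<open>k < n\<close>
    by (simp add: chain_pt.simps chain_rect.simps)
qed

lemma chain_rect_anchored:
  assumes corner: "gadget_packing corner" and x: "x \<in> sites"
  shows "anchored_ok chain_points (chain_pt x) (chain_rect corner x)"
proof -
  obtain k t where x_eq: "x = (k, t)" by fastforce
  define u where "u = (if k < n then corner t else (1, 1))"
  have r: "chain_rect corner x = lvl_rect k (site_pt t, u)"
    by (simp add: x_eq u_def chain_rect.simps)
  have u: "site_pt t \<le> u" "u \<le> (1, 1)"
    using corner site_pt_bounds(2) by (auto simp: u_def gadget_packing_def)
  have "rect_set (lvl_rect k (site_pt t, u)) \<subseteq> unit_sq"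
    using site_pt_bounds(1) u(2) by (rule rect_set_lvl_rect_subset)
  moreover have "lvl_pt k (site_pt t) \<le> lvl_pt k u" using u(1) by simp
  moreover have "\<forall>q\<in>chain_points. q \<notin> rect_int (chain_rect corner x)"
    using chain_pt_notin_chain_rect[OF corner x[unfolded x_eq]] by (auto simp: chain_points_def x_eq)
  ultimately show ?thesis
    unfolding anchored_ok_def r by (auto simp: x_eq chain_pt.simps lvl_rect_def less_eq_prod_def)
qed

lemma chain_rect_disjoint:
  assumes corner: "gadget_packing corner" and "x \<in> sites" "y \<in> sites" "x \<noteq> y"
  shows "rect_int (chain_rect corner x) \<inter> rect_int (chain_rect corner y) = {}"
proof -
  have lower: "rect_int (chain_rect corner (k, t)) \<inter> rect_int (chain_rect corner (k', t')) = {}"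
    if "k < k'" "(k', t') \<in> sites" for k t k' t'
  proof -
    have "k < n" using that sites_level_le by fastforce
    then show ?thesis
      using corner lvl_rects_disjoint[OF that(1) _ site_pt_bounds(1)]
      by (simp add: chain_rect.simps gadget_packing_def)
  qed
  obtain k t k' t' where x: "x = (k, t)" and y: "y = (k', t')" by fastforce
  consider "k = k'" | "k < k'" | "k' < k" by linarith
  then show ?thesis
  proof cases
    case 1
    then have "k < n" "t \<noteq> t'" using assms(2-4) by (auto simp: x y sites_def)
    then show ?thesis using corner 1 by (simp add: x y chain_rect.simps gadget_packing_def)
  next
    case 2
    then show ?thesis using lower assms(3) by (simp add: x y)
  next
    case 3
    then show ?thesis using lower[OF 3] assms(2) by (simp add: x y Int_commute)
  qed
qed

lemma rect_at_chain_pt: "x \<in> sites \<Longrightarrow> rect_at corner (chain_pt x) = chain_rect corner x"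
  by (simp add: rect_at_def the_inv_into_f_f inj_on_chain_pt)

lemma llarp_map_rect_at:
  assumes "gadget_packing corner"
  shows "llarp_map chain_points (rect_at corner)"
  unfolding llarp_map_def
proof (intro conjI ballI impI)
  fix p assume "p \<in> chain_points"
  then obtain x where "x \<in> sites" "p = chain_pt x" by (auto simp: chain_points_def)
  then show "anchored_ok chain_points p (rect_at corner p)"
    using chain_rect_anchored[OF assms] by (simp add: rect_at_chain_pt)
next
  fix p q assume "p \<in> chain_points" "q \<in> chain_points" "p \<noteq> q"
  then obtain x y where "x \<in> sites" "y \<in> sites" "p = chain_pt x" "q = chain_pt y" "x \<noteq> y"
    by (auto simp: chain_points_def)
  then show "rect_int (rect_at corner p) \<inter> rect_int (rect_at corner q) = {}"
    using chain_rect_disjoint[OF assms] by (simp add: rect_at_chain_pt)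
qed

lemma sum_rect_at_area:
  "(\<Sum>p\<in>chain_points. rect_area (rect_at corner p))
    = (\<Sum>k<n. ((1 - z)\<^sup>2) ^ k * (\<Sum>t\<in>UNIV. rect_area (site_pt t, corner t))) + ((1 - z)\<^sup>2) ^ n"
proof -
  have "(\<Sum>p\<in>chain_points. rect_area (rect_at corner p)) = (\<Sum>x\<in>sites. rect_area (chain_rect corner x))"
    unfolding chain_points_def by (simp add: sum.reindex inj_on_chain_pt rect_at_chain_pt)
  also have "\<dots> = (\<Sum>x\<in>{..<n} \<times> UNIV. rect_area (chain_rect corner x))
      + rect_area (chain_rect corner (n, Corner))"
    unfolding sites_def by (subst sum.union_disjoint) (auto simp: UNIV_site)
  also have "(\<Sum>x\<in>{..<n} \<times> UNIV. rect_area (chain_rect corner x))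
      = (\<Sum>k<n. \<Sum>t\<in>UNIV. rect_area (chain_rect corner (k, t)))"
    by (rule sum.cartesian_product')
  also have "\<dots> = (\<Sum>k<n. ((1 - z)\<^sup>2) ^ k * (\<Sum>t\<in>UNIV. rect_area (site_pt t, corner t)))"
    by (intro sum.cong refl) (simp add: chain_rect.simps rect_area_lvl_rect sum_distrib_left)
  also have "rect_area (chain_rect corner (n, Corner)) = ((1 - z)\<^sup>2) ^ n"
    by (simp add: chain_rect.simps rect_area_lvl_rect) (simp add: rect_area_def)
  finally show ?thesis .
qed

lemma OPT_chain_points_ge_1: "1 \<le> OPT chain_points"
proof -
  have "packing_area (rect_at opt_corner ` chain_points)
      = (\<Sum>k<n. ((1 - z)\<^sup>2) ^ k) * (1 - (1 - z)\<^sup>2) + ((1 - z)\<^sup>2) ^ n"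
    using finite_chain_points llarp_map_rect_at[OF gadget_packing_corners(2)]
    by (simp add: packing_area_eq_sum sum_rect_at_area sum_opt_corner_area sum_distrib_right)
  also have "\<dots> = 1"
    by (simp add: one_diff_power_eq[symmetric] mult.commute)
  finally have "packing_area (rect_at opt_corner ` chain_points) = 1" .
  moreover have "is_llarp chain_points (rect_at opt_corner ` chain_points)"
    using llarp_map_rect_at[OF gadget_packing_corners(2)] by (auto simp: is_llarp_iff)
  ultimately show ?thesis using packing_area_le_OPT[OF finite_chain_points] by metis
qed

lemma chain_rect_next_level:
  obtains e where "z < fst e" "z < snd e"
    "chain_rect greedy_corner (Suc k, Corner) = lvl_rect k ((z, z), e)"
proof -
  define u where "u = (if Suc k < n then greedy_corner Corner else (1, 1))"
  show ?thesis
  proof (rule that[of "(z + (1 - z) * fst u, z + (1 - z) * snd u)"])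
    show "z < fst (z + (1 - z) * fst u, z + (1 - z) * snd u)"
      "z < snd (z + (1 - z) * fst u, z + (1 - z) * snd u)"
      using gadget_order by (auto simp: u_def)
    show "chain_rect greedy_corner (Suc k, Corner)
        = lvl_rect k ((z, z), (z + (1 - z) * fst u, z + (1 - z) * snd u))"
      by (simp add: chain_rect.simps lvl_rect_def lvl_pt_def lvl_Suc u_def)
  qed
qed

lemma greedy_rect_forced:
  assumes x: "(k, t) \<in> sites"
    and cand: "greedy_cand chain_points prev (chain_pt (k, t)) r"
    and area: "rect_area (chain_rect greedy_corner (k, t)) \<le> rect_area r"
    and blockers_placed: "\<And>t'. k < n \<Longrightarrow> t' \<in> blockers t \<Longrightarrow> chain_rect greedy_corner (k, t') \<in> prev"
    and next_placed: "k < n \<Longrightarrow> t \<in> {Top, Right} \<Longrightarrow> chain_rect greedy_corner (Suc k, Corner) \<in> prev"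
  shows "r = chain_rect greedy_corner (k, t)"
proof -
  obtain w where r: "r = lvl_rect k (site_pt t, w)" and w: "site_pt t \<le> w" "w \<le> (1, 1)"
    and points: "\<And>q. lvl_pt k q \<in> chain_points \<Longrightarrow> q \<notin> rect_int (site_pt t, w)"
    and placed: "\<And>r'. lvl_rect k r' \<in> prev \<Longrightarrow> rect_int (site_pt t, w) \<inter> rect_int r' = {}"
    using greedy_cand_lvl_cases[OF cand[unfolded chain_pt.simps]] by blast
  have area': "rect_area (site_pt t, if k < n then greedy_corner t else (1, 1)) \<le> rect_area (site_pt t, w)"
    using area z_less_1 by (simp add: r chain_rect.simps rect_area_lvl_rect)
  show ?thesis
  proof (cases "k < n")
    case False
    then have "t = Corner" using x by (auto simp: sites_def)
    then have "w = (1, 1)"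
      using rect_corner_eq_if_area_ge[OF w] area' False by (simp add: rect_area_def)
    then show ?thesis using False by (simp add: r chain_rect.simps)
  next
    case True
    obtain e where e: "z < fst e" "z < snd e"
      and "chain_rect greedy_corner (Suc k, Corner) = lvl_rect k ((z, z), e)"
      by (rule chain_rect_next_level)
    then have next_blocked: "rect_int (site_pt t, w) \<inter> rect_int ((z, z), e) = {}"
      if "t \<in> {Top, Right}"
      using placed next_placed[OF True that] by simp
    have points': "site_pt t' \<notin> rect_int (site_pt t, w)" for t'
    proof -
      have "lvl_pt k (site_pt t') \<in> chain_points"
        using True unfolding chain_points_def
        by (auto simp: sites_def chain_pt.simps intro!: image_eqI[where x = "(k, t')"])
      then show ?thesis by (rule points)
    qed
    have blocked: "rect_int (site_pt t, w) \<inter> rect_int (site_pt t', greedy_corner t') = {}"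
      if "t' \<in> blockers t" for t'
      using placed blockers_placed[OF True that] True by (simp add: chain_rect.simps)
    have "w = greedy_corner t"
      using area' True by (intro greedy_corner_forced[OF w _ points' blocked next_blocked e]) simp
    then show ?thesis using True by (simp add: r chain_rect.simps)
  qed
qed

lemma greedy_run_chain:
  assumes g: "\<And>p q. p \<in> unit_sq \<Longrightarrow> q \<in> unit_sq \<Longrightarrow> sort_pt q < sort_pt p \<Longrightarrow> g q < g p"
    and run: "greedy_run g chain_points ps rs"
  shows "rs = map (rect_at greedy_corner) ps"
proof (rule greedy_run_eq_map[OF run llarp_map_rect_at[OF gadget_packing_corners(1)]])
  fix p prev r
  assume p: "p \<in> chain_points"
    and prev: "rect_at greedy_corner ` {q \<in> chain_points. g p < g q} \<subseteq> prev"
    and cand: "greedy_cand chain_points prev p r"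
    and area: "rect_area (rect_at greedy_corner p) \<le> rect_area r"
  obtain k t where x: "(k, t) \<in> sites" and p_eq: "p = chain_pt (k, t)"
    using p by (auto simp: chain_points_def)
  have placed: "chain_rect greedy_corner y \<in> prev"
    if "y \<in> sites" "sort_pt (site_pt t) < sort_pt q" "chain_pt y = lvl_pt k q" "q \<in> unit_sq" for y q
  proof -
    have "g p < g (chain_pt y)"
      using g[of "lvl_pt k q" p] that site_pt_bounds(3)[of t]
      by (simp add: p_eq chain_pt.simps sort_pt_lvl_pt lvl_pt_unit_sq)
    then show ?thesis
      using prev that(1) rect_at_chain_pt[OF that(1)] by (force simp: chain_points_def)
  qed
  show "r = rect_at greedy_corner p"
    unfolding p_eq rect_at_chain_pt[OF x]
  proof (rule greedy_rect_forced[OF x])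
    show "greedy_cand chain_points prev (chain_pt (k, t)) r" using cand by (simp add: p_eq)
    show "rect_area (chain_rect greedy_corner (k, t)) \<le> rect_area r"
      using area by (simp add: p_eq rect_at_chain_pt[OF x])
  next
    fix t' assume "k < n" "t' \<in> blockers t"
    then show "chain_rect greedy_corner (k, t') \<in> prev"
      using placed[of "(k, t')" "site_pt t'"] sort_pt_blocker_less site_pt_bounds(3)
      by (simp add: sites_def chain_pt.simps)
  next
    assume "k < n" "t \<in> {Top, Right}"
    then have "(Suc k, Corner) \<in> sites" "sort_pt (site_pt t) < sort_pt (z, z)"
      using sort_pt_less_next_level by (auto simp: sites_def sort_pt_def)
    moreover have "chain_pt (Suc k, Corner) = lvl_pt k (z, z)"
      by (simp add: chain_pt.simps lvl_pt_def lvl_def algebra_simps)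
    moreover have "(z, z) \<in> unit_sq" using gadget_order by (simp add: unit_sq_def)
    ultimately show "chain_rect greedy_corner (Suc k, Corner) \<in> prev"
      by (rule placed)
  qed
qed

lemma greedy_packing_area:
  assumes g: "\<And>p q. p \<in> unit_sq \<Longrightarrow> q \<in> unit_sq \<Longrightarrow> sort_pt q < sort_pt p \<Longrightarrow> g q < g p"
    and run: "greedy_run g chain_points ps rs"
  shows "packing_area (set rs) = 1 - c * (1 - h) * (\<Sum>k<n. ((1 - z)\<^sup>2) ^ k)"
proof -
  have "set rs = rect_at greedy_corner ` chain_points"
    using greedy_run_chain[OF g run] run by (simp add: greedy_run_def)
  then have "packing_area (set rs)
      = (\<Sum>k<n. ((1 - z)\<^sup>2) ^ k) * (1 - (1 - z)\<^sup>2 - c * (1 - h)) + ((1 - z)\<^sup>2) ^ n"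
    using finite_chain_points llarp_map_rect_at[OF gadget_packing_corners(1)]
    by (simp add: packing_area_eq_sum sum_rect_at_area sum_greedy_corner_area sum_distrib_right)
  also have "\<dots> = 1 - c * (1 - h) * (\<Sum>k<n. ((1 - z)\<^sup>2) ^ k)"
    using one_diff_power_eq[of "(1 - z)\<^sup>2" n] by (simp add: algebra_simps)
  finally show ?thesis .
qed

end

section \<open>Choice of the parameters\<close>

text \<open>With \<open>a = c + c\<^sup>2\<close>, \<open>h = 2c\<close> and \<open>z = 2c + c\<^sup>2\<close> the area missed by greedy per level,
  \<open>c (1 - h)\<close>, is almost a quarter of the area \<open>1 - (1 - z)\<^sup>2 \<le> 4c\<close> of a level.\<close>
lemma gadget_parameters:
  fixes \<epsilon> :: real
  assumes "0 < \<epsilon>"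
  obtains c a h z N where "gadget c a h z"
    "1 - c * (1 - h) * (\<Sum>k<N. ((1 - z)\<^sup>2) ^ k) \<le> 3 / 4 + \<epsilon>"
proof -
  define c where "c = min (1 / 10) \<epsilon>"
  define q where "q = (1 - (2 * c + c * c))\<^sup>2"
  have c: "0 < c" "c \<le> 1 / 10" "c \<le> \<epsilon>" using assms by (auto simp: c_def)
  have c_sq: "0 < c * c" "c * c \<le> c / 10" using c by (simp_all add: mult_le_cancel_left_pos)
  have "gadget c (c + c * c) (2 * c) (2 * c + c * c)"
  proof
    have "0 < c ^ 3" using c by simp
    then show "c * (1 - (c + c * c)) < 2 * c - (c + c * c)"
      by (simp add: algebra_simps power2_eq_square power3_eq_cube)
  qed (use c c_sq in linarith)+
  have "0 < 1 - (2 * c + c * c)" "1 - (2 * c + c * c) < 1" using c c_sq by linarith+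
  then have q: "0 \<le> q" "q < 1"
    using mult_strict_mono[of "1 - (2 * c + c * c)" 1 "1 - (2 * c + c * c)" 1]
    by (simp_all add: q_def power2_eq_square)
  have "1 - q = 4 * c - 2 * c\<^sup>2 - 4 * c ^ 3 - c ^ 4"
    by (simp add: q_def power2_eq_square power3_eq_cube power4_eq_xxxx algebra_simps)
  moreover have "0 \<le> 2 * c\<^sup>2 + 4 * c ^ 3 + c ^ 4" using c by simp
  ultimately have level_area: "1 - q \<le> 4 * c" by linarith
  have "(1 / 4 - \<epsilon>) * (1 - q) < (1 / 4 - c / 2) * (1 - q)"
    using c q by (intro mult_strict_right_mono) auto
  also have "\<dots> \<le> (1 / 4 - c / 2) * (4 * c)"
    using c level_area by (intro mult_left_mono) auto
  finally have "1 / 4 - \<epsilon> < c * (1 - 2 * c) / (1 - q)"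
    using q by (simp add: field_simps)
  moreover have "(\<lambda>N. c * (1 - 2 * c) * (\<Sum>k<N. q ^ k)) \<longlonglongrightarrow> c * (1 - 2 * c) * (1 / (1 - q))"
    using geometric_sums[of q] q by (intro tendsto_mult_left) (simp add: sums_def)
  ultimately have "\<forall>\<^sub>F N in sequentially. 1 / 4 - \<epsilon> < c * (1 - 2 * c) * (\<Sum>k<N. q ^ k)"
    by (intro order_tendstoD(1)) auto
  then obtain N where "1 / 4 - \<epsilon> < c * (1 - 2 * c) * (\<Sum>k<N. q ^ k)"
    by (auto simp: eventually_sequentially)
  then show ?thesis
    by (intro that[OF \<open>gadget c (c + c * c) (2 * c) (2 * c + c * c)\<close>, of N]) (simp add: q_def)
qed

theorem theorem9:
  fixes g :: "real \<times> real \<Rightarrow> real"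
  assumes sym: "\<forall>x\<in>{0..1}. \<forall>y\<in>{0..1}. g (x, y) = g (y, x)"
    and incx: "\<forall>x\<in>{0..1}. \<forall>x'\<in>{0..1}. \<forall>y\<in>{0..1}. x > x' \<longrightarrow> g (x, y) > g (x', y)"
    and incy: "\<forall>x\<in>{0..1}. \<forall>y\<in>{0..1}. \<forall>y'\<in>{0..1}. y > y' \<longrightarrow> g (x, y) > g (x, y')"
  shows "\<forall>\<epsilon>>0. \<exists>S. finite S \<and> S \<subseteq> unit_sq \<and> (0, 0) \<in> S \<and>
           (\<forall>ps rs. greedy_run g S ps rs \<longrightarrow>
              packing_area (set rs) / OPT S \<le> 3 / 4 + \<epsilon>)"
proof (intro allI impI)
  fix \<epsilon> :: real
  assume "0 < \<epsilon>"
  then obtain c a h z N where "gadget c a h z"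
    and ratio: "1 - c * (1 - h) * (\<Sum>k<N. ((1 - z)\<^sup>2) ^ k) \<le> 3 / 4 + \<epsilon>"
    by (rule gadget_parameters)
  then interpret gadget_chain c a h z N by (simp add: gadget_chain_def)
  have g: "g q < g p" if "p \<in> unit_sq" "q \<in> unit_sq" "sort_pt q < sort_pt p" for p q
    using g_less_if_sort_pt_less[OF sym incx incy that] .
  show "\<exists>S. finite S \<and> S \<subseteq> unit_sq \<and> (0, 0) \<in> S \<and>
      (\<forall>ps rs. greedy_run g S ps rs \<longrightarrow> packing_area (set rs) / OPT S \<le> 3 / 4 + \<epsilon>)"
  proof (intro exI[of _ chain_points] conjI allI impI)
    fix ps rs assume run: "greedy_run g chain_points ps rs"
    have "packing_area (set rs) / OPT chain_points \<le> packing_area (set rs)"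
      using OPT_chain_points_ge_1 by (simp add: packing_area_def divide_le_eq mult_le_cancel_left1)
    then show "packing_area (set rs) / OPT chain_points \<le> 3 / 4 + \<epsilon>"
      using greedy_packing_area[OF g run] ratio by simp
  qed (simp_all add: finite_chain_points chain_points_subset_unit_sq origin_in_chain_points)
qed

end
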